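(* Let $p,q$ be language models over a finite non-empty alphabet $\Sigma$ with $\mathrm{KL}(p\|q)<\infty$ and with $q(y)=0$ whenever $p(y)=0$. For $Y\sim p$ let $f(Y)=\log\frac{p(Y)}{q(Y)}$ and $g(Y)=\frac{q(Y)}{p(Y)}$. Then $\mathrm{Cov}(f(Y),g(Y))=0$ if and only if $p=q$.
   Context: Language models are probability distributions over $\Sigma^*$; $\mathrm{KL}(p\|q)=\sum_y p(y)\log\frac{p(y)}{q(y)}$, natural log, $0\log 0=0$. *)

theory Defs
  imports "HOL-Probability.Probability"
begin

text \<open>A language model over a finite non-empty alphabet 'a is a probability
  distribution (pmf) on 'a list (the set of finite strings).\<close>

definition KL_term :: "'b pmf \<Rightarrow> 'b pmf \<Rightarrow> 'b \<Rightarrow> real" where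
  "KL_term p q y = (if pmf p y = 0 then 0 else pmf p y * ln (pmf p y / pmf q y))"

text \<open>KL(p||q) < infinity: every y with p(y) > 0 has q(y) > 0 (otherwise a
  summand is +infinity) and the series converges (absolutely, as infinite sums in
  HOL-Analysis require; for KL this is equivalent to finiteness).\<close>
definition KL_finite :: "'b pmf \<Rightarrow> 'b pmf \<Rightarrow> bool" where
  "KL_finite p q \<longleftrightarrow> (\<forall>y. pmf p y > 0 \<longrightarrow> pmf q y > 0) \<and> KL_term p q summable_on UNIV"

definition cov_pmf :: "'b pmf \<Rightarrow> ('b \<Rightarrow> real) \<Rightarrow> ('b \<Rightarrow> real) \<Rightarrow> real" where
  "cov_pmf p X Y = measure_pmf.expectation p
     (\<lambda>y. (X y - measure_pmf.expectation p X) * (Y y - measure_pmf.expectation p Y))"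

end

theory Submission
  imports Defs
begin

text \<open>With the likelihood ratio \<open>g = q/p\<close> and \<open>f = ln (p/q) = - ln g\<close> we have
  \<open>E g = 1\<close>, so \<open>Cov(f, g) = E[f (g - 1)] = - E[(g - 1) ln g]\<close>. The integrand
  \<open>(g - 1) ln g\<close> is pointwise nonnegative and vanishes only where \<open>g = 1\<close>;
  hence the covariance is zero iff \<open>p = q\<close> on the support of \<open>p\<close>, and the two
  supports coincide by the hypotheses.\<close>

lemma ln_div_mult_one_minus_div_nonneg:
  fixes a b :: real
  assumes "a > 0" "b > 0"
  shows "0 \<le> ln (a / b) * (1 - b / a)"
proof (cases "b \<le> a")
  case True
  then have "0 \<le> ln (a / b)" "0 \<le> 1 - b / a" using assms by simp_all
  then show ?thesis by simp
next
  case False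
  then have "ln (a / b) < 0" "1 - b / a < 0" using assms by (simp_all add: field_simps)
  then show ?thesis by (simp add: mult_nonpos_nonpos)
qed

lemma ln_div_mult_one_minus_div_eq_0_iff:
  fixes a b :: real
  assumes "a > 0" "b > 0"
  shows "ln (a / b) * (1 - b / a) = 0 \<longleftrightarrow> a = b"
  using assms by (auto simp: field_simps)

lemma likelihood_ratio_pmf:
  assumes "\<And>y. pmf p y = 0 \<Longrightarrow> pmf q y = 0"
  shows "integrable (measure_pmf p) (\<lambda>y. pmf q y / pmf p y)"
    and "measure_pmf.expectation p (\<lambda>y. pmf q y / pmf p y) = 1"
proof -
  have "ennreal (pmf p y) * ennreal (pmf q y / pmf p y) = ennreal (pmf q y)" for y
    using assms[of y] by (cases "pmf p y = 0") (simp_all add: ennreal_mult''[symmetric])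
  then have "(\<integral>\<^sup>+ y. ennreal (pmf q y / pmf p y) \<partial>measure_pmf p) = 1"
    by (simp add: nn_integral_measure_pmf nn_integral_pmf)
  then show "integrable (measure_pmf p) (\<lambda>y. pmf q y / pmf p y)"
    and "measure_pmf.expectation p (\<lambda>y. pmf q y / pmf p y) = 1"
    by (auto intro: integrableI_nonneg simp: integral_eq_nn_integral)
qed

lemma cov_pmf_eq_expectation:
  fixes p :: "'b pmf" and X Y :: "'b \<Rightarrow> real"
  defines "c \<equiv> measure_pmf.expectation p Y"
  assumes Y: "integrable (measure_pmf p) Y"
    and XY: "integrable (measure_pmf p)
               (\<lambda>y. (X y - measure_pmf.expectation p X) * (Y y - c))"
  shows "integrable (measure_pmf p) (\<lambda>y. X y * (Y y - c))"
    and "cov_pmf p X Y = measure_pmf.expectation p (\<lambda>y. X y * (Y y - c))"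
proof -
  let ?a = "measure_pmf.expectation p X"
  have split: "(\<lambda>y. X y * (Y y - c)) = (\<lambda>y. (X y - ?a) * (Y y - c) + ?a * (Y y - c))"
    by (simp add: algebra_simps)
  have centered: "integrable (measure_pmf p) (\<lambda>y. ?a * (Y y - c))"
    "measure_pmf.expectation p (\<lambda>y. ?a * (Y y - c)) = 0"
    using Y by (simp_all add: c_def)
  show "integrable (measure_pmf p) (\<lambda>y. X y * (Y y - c))"
    unfolding split using XY centered by simp
  show "cov_pmf p X Y = measure_pmf.expectation p (\<lambda>y. X y * (Y y - c))"
    unfolding split cov_pmf_def c_def[symmetric] using XY centered by simp
qed

lemma integral_nonneg_eq_0_imp_zero_on_support:
  fixes h :: "'b \<Rightarrow> real"
  assumes "integrable (measure_pmf p) h" "\<And>y. 0 \<le> h y"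
    and "measure_pmf.expectation p h = 0"
  shows "\<forall>y \<in> set_pmf p. h y = 0"
  using assms integral_nonneg_eq_0_iff_AE[of "measure_pmf p" h]
  by (simp add: AE_measure_pmf_iff)

lemma set_pmf_eq_if_KL_finite:
  assumes "KL_finite p q" and "\<And>y. pmf p y = 0 \<Longrightarrow> pmf q y = 0"
  shows "set_pmf p = set_pmf q"
proof (intro set_eqI iffI)
  show "y \<in> set_pmf q" if "y \<in> set_pmf p" for y
    using assms(1) that unfolding KL_finite_def by (simp add: pmf_positive_iff)
  show "y \<in> set_pmf p" if "y \<in> set_pmf q" for y
    using assms(2) that by (auto simp: set_pmf_iff)
qed

lemma pmf_eq_if_expectation_log_ratio_zero:
  assumes supp: "set_pmf p = set_pmf q"
    and int: "integrable (measure_pmf p) (\<lambda>y. ln (pmf p y / pmf q y) * (pmf q y / pmf p y - 1))"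
    and zero: "measure_pmf.expectation p (\<lambda>y. ln (pmf p y / pmf q y) * (pmf q y / pmf p y - 1)) = 0"
  shows "p = q"
proof -
  define h where "h y = ln (pmf p y / pmf q y) * (1 - pmf q y / pmf p y)" for y
  have pos_iff: "pmf p y > 0 \<longleftrightarrow> pmf q y > 0" for y
    using supp by (metis pmf_positive_iff)
  have h_nonneg: "0 \<le> h y" for y
  proof (cases "pmf p y = 0")
    case True
    then show ?thesis using supp by (simp add: h_def set_pmf_iff set_eq_iff)
  next
    case False
    then show ?thesis
      using ln_div_mult_one_minus_div_nonneg[of "pmf p y" "pmf q y"] pos_iff[of y]
      by (simp add: h_def order_less_le)
  qed
  have h_eq: "h = (\<lambda>y. - (ln (pmf p y / pmf q y) * (pmf q y / pmf p y - 1)))"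
    by (simp add: h_def fun_eq_iff algebra_simps)
  have h_zero: "\<forall>y \<in> set_pmf p. h y = 0"
    by (rule integral_nonneg_eq_0_imp_zero_on_support) (use int zero h_nonneg in \<open>simp_all add: h_eq\<close>)
  show "p = q"
  proof (rule pmf_eqI)
    fix y
    show "pmf p y = pmf q y"
    proof (cases "y \<in> set_pmf p")
      case True
      with h_zero have "h y = 0" by blast
      then show ?thesis
        using True ln_div_mult_one_minus_div_eq_0_iff[of "pmf p y" "pmf q y"] pos_iff[of y]
        by (simp add: h_def pmf_positive)
    next
      case False
      moreover from False supp have "y \<notin> set_pmf q" by simp
      ultimately show ?thesis by (simp add: set_pmf_iff)
    qed
  qed
qed

theorem proposition4:
  fixes p q :: "('a::finite) list pmf"
  assumes "KL_finite p q"
    and "\<And>y. pmf p y = 0 \<Longrightarrow> pmf q y = 0"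
  shows "(integrable (measure_pmf p)
            (\<lambda>y. (ln (pmf p y / pmf q y) - measure_pmf.expectation p (\<lambda>y. ln (pmf p y / pmf q y)))
               * (pmf q y / pmf p y - measure_pmf.expectation p (\<lambda>y. pmf q y / pmf p y)))
          \<and> cov_pmf p (\<lambda>y. ln (pmf p y / pmf q y)) (\<lambda>y. pmf q y / pmf p y) = 0)
         \<longleftrightarrow> p = q"
proof -
  let ?f = "\<lambda>y. ln (pmf p y / pmf q y)" and ?g = "\<lambda>y. pmf q y / pmf p y"
  note supp = set_pmf_eq_if_KL_finite[OF assms]
  note g = likelihood_ratio_pmf[OF assms(2)]
  note cov = cov_pmf_eq_expectation[where X = ?f and Y = ?g, OF g(1)]
  show ?thesis
  proof
    assume "integrable (measure_pmf p)
              (\<lambda>y. (?f y - measure_pmf.expectation p ?f) * (?g y - measure_pmf.expectation p ?g))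
            \<and> cov_pmf p ?f ?g = 0"
    with cov show "p = q"
      by (intro pmf_eq_if_expectation_log_ratio_zero[OF supp]) (simp_all add: g(2))
  next
    assume "p = q"
    then have "?f y = 0" for y by simp
    then show "integrable (measure_pmf p)
                 (\<lambda>y. (?f y - measure_pmf.expectation p ?f) * (?g y - measure_pmf.expectation p ?g))
               \<and> cov_pmf p ?f ?g = 0"
      by (simp add: cov_pmf_def)
  qed
qed

end
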